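(* Let $n\ge 2$ be a power of 2. Then $\mathsf{Pat}^{\mathsf{M}}(\mathsf{ADDR}_n) \geq 2^n$.
   Context: $\mathsf{ADDR}_n:\{0,1\}^{\log n+n}\to\{0,1\}$ is $\mathsf{ADDR}_n(x,y)=y_{\mathsf{bin}(x)}$ for $x\in\{0,1\}^{\log n}$, $y\in\{0,1\}^n$, where $\mathsf{bin}(x)\in[n]$ is the integer whose binary representation is $x$. For a Boolean function $f$ on $m$ variables with unique M\"obius expansion $f=\sum_{S\subseteq[m]}\widetilde f(S)\mathsf{AND}_S$ ($\mathsf{AND}_S(z)=\prod_{i\in S}z_i$, real coefficients) and M\"obius support $\mathcal S_f=\{S:\widetilde f(S)\neq0\}$, the pattern of an input $z$ is $(\mathsf{AND}_S(z))_{S\in\mathcal S_f}$, and $\mathsf{Pat}^{\mathsf{M}}(f)$ is the number of distinct patterns over all inputs. *)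

theory Defs
  imports Complex_Main
begin

text \<open>A Boolean function on m variables z_0,...,z_{m-1} is modelled as a predicate on
  inputs; an input z in {0,1}^m is identified with the set of indices i < m with z_i = 1.
  Only inputs z \<subseteq> {..<m} are relevant.\<close>

definition AND_fn :: "nat set \<Rightarrow> nat set \<Rightarrow> real" where
  "AND_fn S z = (if S \<subseteq> z then 1 else 0)"

definition mobius_coeff :: "nat \<Rightarrow> (nat set \<Rightarrow> bool) \<Rightarrow> nat set \<Rightarrow> real" where
  "mobius_coeff m f = (THE c. (\<forall>S. S \<notin> Pow {..<m} \<longrightarrow> c S = 0) \<and>
      (\<forall>z \<in> Pow {..<m}. (if f z then 1 else 0) = (\<Sum>S \<in> Pow {..<m}. c S * AND_fn S z)))"

definition mobius_support :: "nat \<Rightarrow> (nat set \<Rightarrow> bool) \<Rightarrow> nat set set" where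
  "mobius_support m f = {S \<in> Pow {..<m}. mobius_coeff m f S \<noteq> 0}"

definition pattern :: "nat \<Rightarrow> (nat set \<Rightarrow> bool) \<Rightarrow> nat set \<Rightarrow> (nat set \<Rightarrow> real)" where
  "pattern m f z = (\<lambda>S. if S \<in> mobius_support m f then AND_fn S z else 0)"

definition PatM :: "nat \<Rightarrow> (nat set \<Rightarrow> bool) \<Rightarrow> nat" where
  "PatM m f = card (pattern m f ` Pow {..<m})"

text \<open>bin(x) for x = (z_0,...,z_{k-1}), with z_0 the most significant bit; value in {0..<2^k}.\<close>

definition bin :: "nat \<Rightarrow> nat set \<Rightarrow> nat" where
  "bin k z = (\<Sum>i<k. if i \<in> z then 2 ^ (k - 1 - i) else 0)"

text \<open>ADDR_n for n = 2^k on k + n variables: the first k are the address x, the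
  next n are y_0,...,y_{n-1}; output is y_{bin(x)}.\<close>

definition ADDR :: "nat \<Rightarrow> nat set \<Rightarrow> bool" where
  "ADDR k z = (k + bin k z \<in> z)"

end

theory Submission imports Defs begin

text \<open>By Moebius inversion the coefficient of \<open>AND\<^sub>S\<close> in a Boolean function \<open>f\<close> is
  \<open>\<Sum>T\<subseteq>S. (-1)^|S - T| f(T)\<close>. For an address \<open>j\<close> let \<open>S\<^sub>j\<close> consist of all address
  variables together with \<open>y\<^sub>j\<close>. Among the subsets of \<open>S\<^sub>j\<close>, \<open>ADDR\<close> is true only at
  \<open>bin\<^sup>-\<^sup>1(j) \<union> {y\<^sub>j}\<close>, so the coefficient of \<open>S\<^sub>j\<close> is \<open>\<plusminus>1\<close> and all \<open>n\<close> sets \<open>S\<^sub>j\<close> lie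
  in the Moebius support. On an input whose address bits are all set, the monomial over \<open>S\<^sub>j\<close>
  reads off \<open>y\<^sub>j\<close>, so the \<open>2^n\<close> such inputs have pairwise distinct patterns.\<close>

lemma bin_Suc: "bin (Suc k) z = 2 * bin k z + (if k \<in> z then 1 else 0)"
proof -
  have "bin (Suc k) z = (\<Sum>i<k. if i \<in> z then 2 ^ (Suc k - 1 - i) else 0) + (if k \<in> z then 1 else 0)"
    by (simp add: bin_def)
  also have "(\<Sum>i<k. if i \<in> z then 2 ^ (Suc k - 1 - i) else 0) =
      (\<Sum>i<k. 2 * (if i \<in> z then 2 ^ (k - 1 - i) else 0::nat))"
  proof (rule sum.cong[OF refl])
    fix i assume "i \<in> {..<k}"
    then have "Suc k - 1 - i = Suc (k - 1 - i)" by auto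
    then show "(if i \<in> z then 2 ^ (Suc k - 1 - i) else 0) = 2 * (if i \<in> z then 2 ^ (k - 1 - i) else 0::nat)"
      by simp
  qed
  also have "\<dots> = 2 * bin k z" by (simp add: bin_def sum_distrib_left)
  finally show ?thesis .
qed

lemma bin_Int_lessThan: "bin k (z \<inter> {..<k}) = bin k z"
  unfolding bin_def by (rule sum.cong) auto

lemma bin_less: "bin k z < 2 ^ k"
proof (induction k)
  case 0 then show ?case by (simp add: bin_def)
next
  case (Suc k) then show ?case by (simp add: bin_Suc)
qed

lemma inj_on_bin: "inj_on (bin k) (Pow {..<k})"
proof (induction k)
  case 0 then show ?case by auto
next
  case (Suc k)
  show ?case
  proof (rule inj_onI)
    fix X Y assume X: "X \<in> Pow {..<Suc k}" and Y: "Y \<in> Pow {..<Suc k}" and eq: "bin (Suc k) X = bin (Suc k) Y"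
    then have "2 * bin k X + (if k \<in> X then 1 else 0) = 2 * bin k Y + (if k \<in> Y then 1 else 0)"
      by (simp add: bin_Suc)
    then have last: "k \<in> X \<longleftrightarrow> k \<in> Y" and "bin k X = bin k Y"
      by (auto split: if_splits) presburger+
    then have "bin k (X \<inter> {..<k}) = bin k (Y \<inter> {..<k})" by (simp add: bin_Int_lessThan)
    then have "X \<inter> {..<k} = Y \<inter> {..<k}" using Suc.IH by (auto dest: inj_onD)
    then show "X = Y" using X Y last unfolding lessThan_Suc by blast
  qed
qed

lemma bij_betw_bin: "bij_betw (bin k) (Pow {..<k}) {..<2 ^ k}"
proof -
  have "bin k ` Pow {..<k} \<subseteq> {..<2 ^ k}" using bin_less by auto
  moreover have "card (bin k ` Pow {..<k}) = card {..<2 ^ k :: nat}"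
    by (simp add: card_image[OF inj_on_bin] card_Pow)
  ultimately show ?thesis
    using inj_on_bin by (simp add: bij_betw_def card_subset_eq)
qed

lemma sum_AND_fn:
  assumes "z \<subseteq> {..<m}"
  shows "(\<Sum>S \<in> Pow {..<m}. c S * AND_fn S z) = (\<Sum>S \<in> Pow z. c S)"
proof -
  have "(\<Sum>S \<in> Pow {..<m}. c S * AND_fn S z) = (\<Sum>S \<in> Pow {..<m}. if S \<in> Pow z then c S else 0)"
    by (rule sum.cong) (auto simp: AND_fn_def)
  also have "\<dots> = (\<Sum>S \<in> Pow {..<m} \<inter> Pow z. c S)"
    by (simp add: sum.inter_restrict)
  also have "Pow {..<m} \<inter> Pow z = Pow z" using assms by auto
  finally show ?thesis .
qed

definition mobius_expansion :: "nat \<Rightarrow> (nat set \<Rightarrow> real) \<Rightarrow> (nat set \<Rightarrow> real) \<Rightarrow> bool" where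
  "mobius_expansion m g c \<longleftrightarrow> (\<forall>S. S \<notin> Pow {..<m} \<longrightarrow> c S = 0) \<and>
     (\<forall>z \<in> Pow {..<m}. g z = (\<Sum>S \<in> Pow {..<m}. c S * AND_fn S z))"

definition mobius_inverse :: "nat \<Rightarrow> (nat set \<Rightarrow> real) \<Rightarrow> nat set \<Rightarrow> real" where
  "mobius_inverse m g S =
     (if S \<subseteq> {..<m} then \<Sum>T \<in> Pow S. (-1) ^ (card S - card T) * g T else 0)"

lemma mobius_expansion_mobius_inverse: "mobius_expansion m g (mobius_inverse m g)"
  unfolding mobius_expansion_def
proof (intro conjI allI impI ballI)
  fix S assume "S \<notin> Pow {..<m}"
  then show "mobius_inverse m g S = 0" by (simp add: mobius_inverse_def)
next
  fix z assume z: "z \<in> Pow {..<m}"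
  then have "finite z" by (auto intro: finite_subset)
  define h where "h = (\<lambda>S. \<Sum>T \<in> Pow S. (-1) ^ card T * g T)"
  have "g z = (\<Sum>S \<in> Pow z. (-1) ^ card S * h S)"
    by (rule inclusion_exclusion_symmetric[OF _ \<open>finite z\<close>]) (simp add: h_def)
  also have "\<dots> = (\<Sum>S \<in> Pow z. mobius_inverse m g S)"
  proof (rule sum.cong[OF refl])
    fix S assume S: "S \<in> Pow z"
    with z \<open>finite z\<close> have "S \<subseteq> {..<m}" "finite S" by (auto intro: finite_subset)
    have "(-1) ^ card S * h S = (\<Sum>T \<in> Pow S. (-1) ^ (card S + card T) * g T)"
      by (simp add: h_def sum_distrib_left power_add mult.assoc)
    also have "\<dots> = (\<Sum>T \<in> Pow S. (-1) ^ (card S - card T) * g T)"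
      using \<open>finite S\<close>
      by (intro sum.cong[OF refl]) (simp add: card_mono neg_one_power_add_eq_neg_one_power_diff)
    finally show "(-1) ^ card S * h S = mobius_inverse m g S"
      using \<open>S \<subseteq> {..<m}\<close> by (simp add: mobius_inverse_def)
  qed
  also have "\<dots> = (\<Sum>S \<in> Pow {..<m}. mobius_inverse m g S * AND_fn S z)"
    using z by (simp add: sum_AND_fn)
  finally show "g z = (\<Sum>S \<in> Pow {..<m}. mobius_inverse m g S * AND_fn S z)" .
qed

lemma mobius_expansion_unique:
  assumes "mobius_expansion m g c"
  shows "c = mobius_inverse m g"
proof
  fix S
  show "c S = mobius_inverse m g S"
  proof (cases "S \<subseteq> {..<m}")
    case False
    with assms show ?thesis by (simp add: mobius_expansion_def mobius_inverse_def)
  next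
    case True
    then have "finite S" by (rule finite_subset) simp
    have sum_c: "sum c (Pow T) = g T" if "T \<in> Pow S" for T
      using assms that True by (simp add: mobius_expansion_def sum_AND_fn)
    have "c S = (\<Sum>T \<in> Pow S. (-1) ^ (card S - card T) * sum c (Pow T))"
      by (rule inclusion_exclusion_mobius[OF _ \<open>finite S\<close>]) simp
    also have "\<dots> = (\<Sum>T \<in> Pow S. (-1) ^ (card S - card T) * g T)"
      by (simp add: sum_c)
    finally show ?thesis using True by (simp add: mobius_inverse_def)
  qed
qed

lemma mobius_coeff_eq_mobius_inverse:
  "mobius_coeff m f = mobius_inverse m (\<lambda>z. if f z then 1 else 0)"
proof -
  have "mobius_coeff m f = (THE c. mobius_expansion m (\<lambda>z. if f z then 1 else 0) c)"
    by (simp add: mobius_coeff_def mobius_expansion_def)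
  then show ?thesis
    using mobius_expansion_mobius_inverse mobius_expansion_unique by (metis the_equality)
qed

lemma mobius_coeff_unique_true_subset:
  assumes "S \<subseteq> {..<m}" and "T\<^sub>0 \<subseteq> S" and "\<And>T. T \<subseteq> S \<Longrightarrow> f T \<longleftrightarrow> T = T\<^sub>0"
  shows "mobius_coeff m f S = (-1) ^ (card S - card T\<^sub>0)"
proof -
  have "finite (Pow S)" using assms(1) by (simp add: finite_subset)
  have "mobius_coeff m f S = (\<Sum>T \<in> Pow S. if T = T\<^sub>0 then (-1) ^ (card S - card T) else 0)"
    using assms unfolding mobius_coeff_eq_mobius_inverse mobius_inverse_def
    by (auto intro!: sum.cong)
  also have "\<dots> = (-1) ^ (card S - card T\<^sub>0)"
    using assms(2) \<open>finite (Pow S)\<close> by (simp add: sum.delta)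
  finally show ?thesis .
qed

lemma ADDR_subset_iff:
  assumes "X \<subseteq> {..<k}" and "T \<subseteq> {..<k} \<union> {k + bin k X}"
  shows "ADDR k T \<longleftrightarrow> T = insert (k + bin k X) X"
proof
  assume "ADDR k T"
  with assms(2) have "k + bin k T \<in> {..<k} \<union> {k + bin k X}" unfolding ADDR_def by blast
  then have same_address: "bin k T = bin k X" by auto
  then have "bin k (T \<inter> {..<k}) = bin k X" by (simp add: bin_Int_lessThan)
  then have "T \<inter> {..<k} = X" using inj_on_bin assms(1) by (auto dest: inj_onD)
  moreover have "k + bin k X \<in> T" using \<open>ADDR k T\<close> same_address by (simp add: ADDR_def)
  ultimately show "T = insert (k + bin k X) X" using assms(2) by auto
next
  assume T: "T = insert (k + bin k X) X"
  with assms(1) have "T \<inter> {..<k} = X" by auto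
  then have "bin k T = bin k X" by (metis bin_Int_lessThan)
  with T show "ADDR k T" by (simp add: ADDR_def)
qed

lemma mobius_support_ADDR:
  assumes "j < 2 ^ k"
  shows "{..<k} \<union> {k + j} \<in> mobius_support (k + 2 ^ k) (ADDR k)"
proof -
  obtain X where X: "X \<subseteq> {..<k}" "bin k X = j"
    using bij_betw_bin assms by (metis PowD bij_betw_iff_bijections lessThan_iff)
  have "mobius_coeff (k + 2 ^ k) (ADDR k) ({..<k} \<union> {k + j}) = (-1) ^ (card ({..<k} \<union> {k + j}) - card (insert (k + j) X))"
    using X assms ADDR_subset_iff[OF X(1)]
    by (intro mobius_coeff_unique_true_subset) auto
  then show ?thesis
    using assms by (auto simp: mobius_support_def)
qed

lemma pattern_eq_imp_subset_iff:
  assumes "pattern m f z = pattern m f z'" and "S \<in> mobius_support m f"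
  shows "S \<subseteq> z \<longleftrightarrow> S \<subseteq> z'"
  using fun_cong[OF assms(1), of S] assms(2) by (simp add: pattern_def AND_fn_def split: if_splits)

lemma inj_on_pattern_ADDR:
  assumes "n = 2 ^ k"
  shows "inj_on (\<lambda>T. pattern (k + n) (ADDR k) ({..<k} \<union> (+) k ` T)) (Pow {..<n})"
proof (rule inj_onI)
  fix T T' assume "T \<in> Pow {..<n}" "T' \<in> Pow {..<n}"
    and eq: "pattern (k + n) (ADDR k) ({..<k} \<union> (+) k ` T) = pattern (k + n) (ADDR k) ({..<k} \<union> (+) k ` T')"
  have "j \<in> T \<longleftrightarrow> j \<in> T'" if "j < n" for j
  proof -
    have "{..<k} \<union> {k + j} \<subseteq> {..<k} \<union> (+) k ` U \<longleftrightarrow> j \<in> U" for U by auto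
    then show ?thesis
      using pattern_eq_imp_subset_iff[OF eq] mobius_support_ADDR that assms by metis
  qed
  with \<open>T \<in> Pow {..<n}\<close> \<open>T' \<in> Pow {..<n}\<close> show "T = T'" by blast
qed

theorem claimA4:
  fixes n k :: nat
  assumes "2 \<le> n" and "n = 2 ^ k"
  shows "2 ^ n \<le> PatM (k + n) (ADDR k)"
proof -
  let ?pat = "\<lambda>T. pattern (k + n) (ADDR k) ({..<k} \<union> (+) k ` T)"
  have "2 ^ n = card (Pow {..<n})" by (simp add: card_Pow)
  also have "\<dots> = card (?pat ` Pow {..<n})"
    using card_image[OF inj_on_pattern_ADDR[OF assms(2)]] by simp
  also have "\<dots> \<le> card (pattern (k + n) (ADDR k) ` Pow {..<k + n})"
    by (rule card_mono) (auto intro!: imageI)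
  finally show ?thesis by (simp add: PatM_def)
qed

end
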